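(* Consider ${\rm CHC}_D(\mathbf k,\mathbf n,\lambda)$ under regime (A1) and the test $\psi^c=\psi_{sum}\vee\psi_{max}$ with threshold $W\to\infty$. If either (i) $\dfrac{\lambda\prod_ik_i}{\sqrt{\prod_in_i}}\to\infty$ and $W\le c\,\lambda\dfrac{\prod_ik_i}{\sqrt{\prod_in_i}}$ for some fixed $0<c<1$; or (ii) $\liminf\dfrac{\lambda}{\sqrt{2\sum_{i=1}^d\log n_i}}>1$, then $\mathbb P_0(\psi^c=1)+\sup_{\mathcal X\in\mathscr X_{\rm CHC}(\mathbf k,\mathbf n,\lambda)}\mathbb P_{\mathcal X}(\psi^c=0)\to0$. Under regime (A2) (with a suitable choice of $W$), $\psi^c$ achieves reliable detection when $\beta<(d\alpha-d/2)\vee0$.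
   Context: Model: $\mathcal Y=\mathcal X+\mathcal Z\in\mathbb R^{n_1\times\cdots\times n_d}$, $\mathcal Z$ i.i.d. $N(0,1)$; ${\rm CHC}_D$ tests $H_0:\mathcal X=0$ vs $H_1:\mathcal X\in\mathscr X_{\rm CHC}(\mathbf k,\mathbf n,\lambda)=\{\lambda'\mathbf 1_{I_1}\circ\cdots\circ\mathbf 1_{I_d}:|I_i|=k_i,\lambda'\ge\lambda\}$. $\psi_{sum}=\mathbf 1\big(\sum_{i_1,\dots,i_d}\mathcal Y_{[i_1,\dots,i_d]}/\sqrt{n_1\cdots n_d}>W\big)$; $\psi_{max}=\mathbf 1\big(\max_{i_1,\dots,i_d}\mathcal Y_{[i_1,\dots,i_d]}>\sqrt{2\sum_{i=1}^d\log n_i}\big)$. Regime (A1): $n_i\to\infty,k_i\to\infty,k_i/n_i\to0$ for all $i$. Regime (A2): fixed $\alpha\in[0,1],\beta\in\mathbb R$; $n\to\infty$, $\log n_i/\log n\to1$, $k_i=k$ with $\log k/\log n\to\alpha$, $\log(1/\lambda)/\log n\to\beta$. *)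

theory Defs
  imports "HOL-Probability.Probability"
begin

text \<open>Order-d tensors of size n_0 x ... x n_(d-1) are real functions on the index set
  of multi-indices idx with idx i < n i for i < d (extensional outside {..<d}).\<close>

definition tensor_idx :: "nat \<Rightarrow> (nat \<Rightarrow> nat) \<Rightarrow> (nat \<Rightarrow> nat) set" where
  "tensor_idx d n = PiE {..<d} (\<lambda>i. {..<n i})"

definition gauss_tensor :: "nat \<Rightarrow> (nat \<Rightarrow> nat) \<Rightarrow> ((nat \<Rightarrow> nat) \<Rightarrow> real) measure" where
  "gauss_tensor d n = PiM (tensor_idx d n) (\<lambda>_. density lborel std_normal_density)"

definition chc_class :: "nat \<Rightarrow> (nat \<Rightarrow> nat) \<Rightarrow> (nat \<Rightarrow> nat) \<Rightarrow> real \<Rightarrow> ((nat \<Rightarrow> nat) \<Rightarrow> real) set" where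
  "chc_class d k n lam = {X. \<exists>S lam'. lam' \<ge> lam \<and>
      (\<forall>i<d. S i \<subseteq> {..<n i} \<and> card (S i) = k i) \<and>
      X = (\<lambda>idx. if (\<forall>i<d. idx i \<in> S i) then lam' else 0)}"

definition psi_sum :: "nat \<Rightarrow> (nat \<Rightarrow> nat) \<Rightarrow> real \<Rightarrow> ((nat \<Rightarrow> nat) \<Rightarrow> real) \<Rightarrow> bool" where
  "psi_sum d n W Y \<longleftrightarrow>
     (\<Sum>idx\<in>tensor_idx d n. Y idx) / sqrt (\<Prod>i<d. real (n i)) > W"

definition psi_max :: "nat \<Rightarrow> (nat \<Rightarrow> nat) \<Rightarrow> ((nat \<Rightarrow> nat) \<Rightarrow> real) \<Rightarrow> bool" where
  "psi_max d n Y \<longleftrightarrow>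
     Max (Y ` tensor_idx d n) > sqrt (2 * (\<Sum>i<d. ln (real (n i))))"

definition psi_c :: "nat \<Rightarrow> (nat \<Rightarrow> nat) \<Rightarrow> real \<Rightarrow> ((nat \<Rightarrow> nat) \<Rightarrow> real) \<Rightarrow> bool" where
  "psi_c d n W Y \<longleftrightarrow> psi_sum d n W Y \<or> psi_max d n Y"

text \<open>Risk: P_0(psi^c = 1) + sup over the alternative class of P_X(psi^c = 0),
  where under P_X the observation is Y = X + Z.\<close>
definition chc_risk :: "nat \<Rightarrow> (nat \<Rightarrow> nat) \<Rightarrow> (nat \<Rightarrow> nat) \<Rightarrow> real \<Rightarrow> real \<Rightarrow> real" where
  "chc_risk d k n lam W =
     measure (gauss_tensor d n) {Z \<in> space (gauss_tensor d n). psi_c d n W Z}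
   + Sup ((\<lambda>X. measure (gauss_tensor d n)
              {Z \<in> space (gauss_tensor d n). \<not> psi_c d n W (\<lambda>idx. X idx + Z idx)})
          ` chc_class d k n lam)"

text \<open>Regime (A1), for sequences indexed by m: n i m, k i m.\<close>
definition regime_A1 :: "nat \<Rightarrow> (nat \<Rightarrow> nat \<Rightarrow> nat) \<Rightarrow> (nat \<Rightarrow> nat \<Rightarrow> nat) \<Rightarrow> bool" where
  "regime_A1 d n k \<longleftrightarrow> (\<forall>i<d.
      filterlim (\<lambda>m. real (n i m)) at_top sequentially \<and>
      filterlim (\<lambda>m. real (k i m)) at_top sequentially \<and>
      ((\<lambda>m. real (k i m) / real (n i m)) \<longlongrightarrow> 0) sequentially)"

text \<open>Regime (A2), with N the reference size n, common size k, signal lam.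
  Implicit model constraints 1 <= k <= n_i and lam > 0 are included.\<close>
definition regime_A2 :: "nat \<Rightarrow> real \<Rightarrow> real \<Rightarrow> (nat \<Rightarrow> nat) \<Rightarrow> (nat \<Rightarrow> nat \<Rightarrow> nat)
     \<Rightarrow> (nat \<Rightarrow> nat) \<Rightarrow> (nat \<Rightarrow> real) \<Rightarrow> bool" where
  "regime_A2 d \<alpha> \<beta> N n k lam \<longleftrightarrow>
      filterlim (\<lambda>m. real (N m)) at_top sequentially \<and>
      (\<forall>i<d. ((\<lambda>m. ln (real (n i m)) / ln (real (N m))) \<longlongrightarrow> 1) sequentially) \<and>
      ((\<lambda>m. ln (real (k m)) / ln (real (N m))) \<longlongrightarrow> \<alpha>) sequentially \<and>
      ((\<lambda>m. ln (1 / lam m) / ln (real (N m))) \<longlongrightarrow> \<beta>) sequentially \<and>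
      (\<forall>m. 1 \<le> k m \<and> (\<forall>i<d. k m \<le> n i m) \<and> 0 < lam m)"

end

theory Submission
  imports Defs "HOL-Real_Asymp.Real_Asymp"
begin

text \<open>Under the null, the normalised sum of all entries is standard normal and the maximum of the
  \<open>N = \<Prod>i n\<^sub>i\<close> entries exceeds \<open>t = sqrt (2 ln N)\<close> with probability at most
  \<open>N exp (-t\<^sup>2/2) / t = 1/t\<close>; so the false alarm probability of \<open>\<psi>\<^sup>c\<close> is at most \<open>1/W + 1/t\<close>.
  Under an alternative with signal level \<open>\<lambda>\<close>, the sum test misses only if a standard normal falls
  below \<open>W - \<lambda>\<Prod>k\<^sub>i/sqrt N\<close>, and the max test misses only if the noise at one entry of the block
  falls below \<open>t - \<lambda>\<close>. Each condition of the theorem drives one of these Gaussian tails to zero,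
  uniformly over the alternative class. In regime (A2), \<open>\<beta> < 0\<close> makes \<open>\<lambda>\<close> grow polynomially, so
  it dominates \<open>t\<close>, while \<open>\<beta> < d\<alpha> - d/2\<close> makes \<open>\<lambda>\<Prod>k\<^sub>i/sqrt N\<close> grow polynomially, so
  \<open>W\<close> can be taken to be half of it.\<close>

abbreviation max_threshold :: "nat \<Rightarrow> (nat \<Rightarrow> nat) \<Rightarrow> real" where
  "max_threshold d n \<equiv> sqrt (2 * (\<Sum>i<d. ln (real (n i))))"

abbreviation sum_signal :: "nat \<Rightarrow> (nat \<Rightarrow> nat) \<Rightarrow> (nat \<Rightarrow> nat) \<Rightarrow> real \<Rightarrow> real" where
  "sum_signal d k n lam \<equiv> lam * (\<Prod>i<d. real (k i)) / sqrt (\<Prod>i<d. real (n i))"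

abbreviation false_alarm_prob :: "nat \<Rightarrow> (nat \<Rightarrow> nat) \<Rightarrow> real \<Rightarrow> real" where
  "false_alarm_prob d n W \<equiv>
     measure (gauss_tensor d n) {Z \<in> space (gauss_tensor d n). psi_c d n W Z}"

abbreviation miss_prob :: "nat \<Rightarrow> (nat \<Rightarrow> nat) \<Rightarrow> real \<Rightarrow> ((nat \<Rightarrow> nat) \<Rightarrow> real) \<Rightarrow> real" where
  "miss_prob d n W X \<equiv>
     measure (gauss_tensor d n) {Z \<in> space (gauss_tensor d n). \<not> psi_c d n W (\<lambda>idx. X idx + Z idx)}"

section \<open>Gaussian tails\<close>

lemma std_normal_upper_tail_le:
  assumes M: "prob_space M" and X: "distributed M lborel X (\<lambda>x. ennreal (std_normal_density x))"
    and s: "0 < s"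
  shows "measure M {\<omega>\<in>space M. s \<le> X \<omega>} \<le> exp (- s\<^sup>2 / 2) / s"
proof -
  interpret prob_space M by (rule M)
  have deriv: "((\<lambda>x. - std_normal_density x / s) has_real_derivative x * std_normal_density x / s) (at x)"
    for x
    unfolding std_normal_density_def using s by (auto intro!: derivative_eq_intros simp: field_simps)
  have "{\<omega>\<in>space M. s \<le> X \<omega>} = X -` {s..} \<inter> space M" by auto
  then have "emeasure M {\<omega>\<in>space M. s \<le> X \<omega>}
      = (\<integral>\<^sup>+x. ennreal (std_normal_density x) * indicator {s..} x \<partial>lborel)"
    using distributed_emeasure[OF X, of "{s..}"] by simp
  \<comment> \<open>Mills' ratio: on \<open>[s, \<infinity>)\<close> the density is below \<open>x \<phi>(x) / s\<close>, which has antiderivative \<open>-\<phi>(x) / s\<close>.\<close>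
  also have "\<dots> \<le> (\<integral>\<^sup>+x. ennreal (x * std_normal_density x / s) * indicator {s..} x \<partial>lborel)"
    using s by (intro nn_integral_mono) (auto simp: field_simps mult_right_mono ennreal_leI indicator_def)
  also have "\<dots> = ennreal (0 - (- std_normal_density s / s))"
  proof (rule nn_integral_FTC_atLeast[where F="\<lambda>x. - std_normal_density x / s" and T=0])
    have "((\<lambda>x. std_normal_density x) \<longlongrightarrow> 0) at_top"
      unfolding std_normal_density_def by real_asymp
    then show "((\<lambda>x. - std_normal_density x / s) \<longlongrightarrow> 0) at_top"
      using s by (auto intro!: tendsto_eq_intros)
  qed (use s deriv in \<open>auto simp: field_simps\<close>)
  finally have "measure M {\<omega>\<in>space M. s \<le> X \<omega>} \<le> std_normal_density s / s"
    using s by (simp add: emeasure_eq_measure ennreal_le_iff)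
  also have "\<dots> \<le> exp (- s\<^sup>2 / 2) / s"
  proof -
    have "1 / sqrt (2 * pi) \<le> 1" using pi_gt3 by (simp add: divide_le_eq_1 real_less_rsqrt)
    then have "std_normal_density s \<le> exp (- s\<^sup>2 / 2)"
      unfolding std_normal_density_def
      using mult_left_mono[of "1 / sqrt (2 * pi)" 1 "exp (- s\<^sup>2 / 2)"] by simp
    then show ?thesis using s by (simp add: divide_right_mono)
  qed
  finally show ?thesis .
qed

lemma std_normal_tail_le_inverse:
  assumes "prob_space M" "distributed M lborel X (\<lambda>x. ennreal (std_normal_density x))" "0 < s"
  shows "measure M {\<omega>\<in>space M. s \<le> X \<omega>} \<le> 1 / s"
    and "measure M {\<omega>\<in>space M. X \<omega> \<le> - s} \<le> 1 / s"
proof -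
  have le: "exp (- s\<^sup>2 / 2) / s \<le> 1 / s" using assms(3) by (intro divide_right_mono) auto
  then show "measure M {\<omega>\<in>space M. s \<le> X \<omega>} \<le> 1 / s"
    using std_normal_upper_tail_le[OF assms] by linarith
  have "distributed M lborel (\<lambda>x. - X x) (\<lambda>x. ennreal (std_normal_density x))"
    using prob_space.normal_density_affine[OF assms(1,2), where \<alpha>="-1" and \<beta>=0] by simp
  moreover have "{\<omega>\<in>space M. X \<omega> \<le> - s} = {\<omega>\<in>space M. s \<le> - X \<omega>}" by auto
  ultimately show "measure M {\<omega>\<in>space M. X \<omega> \<le> - s} \<le> 1 / s"
    using std_normal_upper_tail_le[OF assms(1) _ assms(3)] le by fastforce
qed

lemma measurable_sets_le_ge:
  fixes X :: "'a \<Rightarrow> real"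
  assumes "X \<in> measurable M lborel"
  shows "{\<omega>\<in>space M. t \<le> X \<omega>} \<in> sets M" and "{\<omega>\<in>space M. X \<omega> \<le> t} \<in> sets M"
  using measurable_sets[OF assms, of "{t..}"] measurable_sets[OF assms, of "{..t}"]
  by (auto simp: vimage_def Int_def conj_commute)

abbreviation std_normal :: "real measure" where
  "std_normal \<equiv> density lborel std_normal_density"

lemma prob_space_std_normal: "prob_space std_normal"
  by (rule prob_space_normal_density) simp

lemma measurable_PiM_component_borel:
  "i \<in> I \<Longrightarrow> (\<lambda>Z. Z i) \<in> measurable (PiM I (\<lambda>_. std_normal)) borel"
  using measurable_component_singleton[of i I "\<lambda>_. std_normal"] by (simp add: measurable_def)

lemma distr_PiM_component_std_normal:
  "i \<in> I \<Longrightarrow> distr (PiM I (\<lambda>_. std_normal)) borel (\<lambda>Z. Z i) = std_normal"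
  using distr_PiM_component[of I "\<lambda>_. std_normal" i] prob_space_std_normal
  by (simp add: distr_cong[of _ _ borel std_normal])

lemma distributed_PiM_component_std_normal:
  assumes "i \<in> I"
  shows "distributed (PiM I (\<lambda>_. std_normal)) lborel (\<lambda>Z. Z i) (\<lambda>x. ennreal (std_normal_density x))"
proof -
  have "distr (PiM I (\<lambda>_. std_normal)) lborel (\<lambda>Z. Z i) = distr (PiM I (\<lambda>_. std_normal)) borel (\<lambda>Z. Z i)"
    by (rule distr_cong) auto
  then show ?thesis
    unfolding distributed_def
    using distr_PiM_component_std_normal[OF assms] measurable_PiM_component_borel[OF assms]
    by (simp add: measurable_def[of _ lborel])
qed

lemma indep_vars_PiM_components_std_normal:
  assumes "I \<noteq> {}"
  shows "prob_space.indep_vars (PiM I (\<lambda>_. std_normal)) (\<lambda>_. borel) (\<lambda>i Z. Z i) I"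
proof -
  interpret P: product_prob_space "\<lambda>_. std_normal" I
    by (intro product_prob_spaceI) (rule prob_space_std_normal)
  have components: "\<And>i. i \<in> I \<Longrightarrow> (\<lambda>Z. Z i) \<in> measurable (PiM I (\<lambda>_. std_normal)) borel"
    by (rule measurable_PiM_component_borel)
  have "distr (PiM I (\<lambda>_. std_normal)) (PiM I (\<lambda>_. borel)) (\<lambda>x. \<lambda>i\<in>I. x i)
      = distr (PiM I (\<lambda>_. std_normal)) (PiM I (\<lambda>_. borel)) (\<lambda>x. x)"
    by (rule distr_cong) (auto simp: space_PiM PiE_iff extensional_restrict)
  also have "\<dots> = PiM I (\<lambda>_. std_normal)"
    by (rule distr_id2, rule sets_PiM_cong) simp_all
  also have "\<dots> = PiM I (\<lambda>i. distr (PiM I (\<lambda>_. std_normal)) borel (\<lambda>Z. Z i))"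
    by (rule PiM_cong) (simp_all add: distr_PiM_component_std_normal)
  finally show ?thesis
    by (subst P.indep_vars_iff_distr_eq_PiM'[OF assms components])
qed

lemma distributed_PiM_normalised_sum:
  assumes "finite I" "I \<noteq> {}"
  shows "distributed (PiM I (\<lambda>_. std_normal)) lborel (\<lambda>Z. (\<Sum>i\<in>I. Z i) / sqrt (real (card I)))
           (\<lambda>x. ennreal (std_normal_density x))"
proof -
  interpret product_prob_space "\<lambda>_. std_normal" I
    by (intro product_prob_spaceI) (rule prob_space_std_normal)
  have "distributed (PiM I (\<lambda>_. std_normal)) lborel (\<lambda>Z. \<Sum>i\<in>I. Z i)
          (\<lambda>x. ennreal (normal_density (\<Sum>i\<in>I. 0) (sqrt (\<Sum>i\<in>I. 1\<^sup>2)) x))"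
    by (rule sum_indep_normal[OF assms indep_vars_PiM_components_std_normal[OF assms(2)]])
      (auto intro: distributed_PiM_component_std_normal)
  moreover have "0 < sqrt (real (card I))" using assms by (simp add: card_gt_0_iff)
  ultimately show ?thesis
    using normal_standard_normal_convert[of "sqrt (real (card I))" "\<lambda>Z. \<Sum>i\<in>I. Z i" 0] by simp
qed

lemma gauss_tensor_eq: "gauss_tensor d n = PiM (tensor_idx d n) (\<lambda>_. std_normal)"
  by (simp add: gauss_tensor_def)

lemma prob_space_gauss_tensor: "prob_space (gauss_tensor d n)"
  unfolding gauss_tensor_eq by (rule prob_space_PiM) (rule prob_space_std_normal)

lemma finite_tensor_idx: "finite (tensor_idx d n)"
  by (simp add: tensor_idx_def finite_PiE)

lemma card_tensor_idx: "card (tensor_idx d n) = (\<Prod>i<d. n i)"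
  by (simp add: tensor_idx_def card_PiE)

lemma tensor_idx_nonempty: "\<forall>i<d. 1 \<le> n i \<Longrightarrow> tensor_idx d n \<noteq> {}"
  unfolding tensor_idx_def PiE_eq_empty_iff by (auto simp: lessThan_empty_iff)

lemma sqrt_prod_eq_sqrt_card_tensor_idx:
  "sqrt (\<Prod>i<d. real (n i)) = sqrt (real (card (tensor_idx d n)))"
  by (simp add: card_tensor_idx)

section \<open>Error probabilities of the combined test\<close>

lemma false_alarm_prob_le:
  assumes n: "\<forall>i<d. 1 \<le> n i" and N: "2 \<le> (\<Prod>i<d. n i)" and W: "0 < W"
  shows "false_alarm_prob d n W \<le> 1 / W + 1 / max_threshold d n"
proof -
  define I where "I = tensor_idx d n"
  define P where "P = gauss_tensor d n"
  define t where "t = max_threshold d n"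
  define S where "S = (\<lambda>Z::(nat \<Rightarrow> nat) \<Rightarrow> real. (\<Sum>idx\<in>I. Z idx) / sqrt (real (card I)))"
  interpret prob_space P unfolding P_def by (rule prob_space_gauss_tensor)
  have P: "P = PiM I (\<lambda>_. std_normal)" by (simp add: P_def I_def gauss_tensor_eq)
  have finI: "finite I" by (simp add: I_def finite_tensor_idx)
  have neI: "I \<noteq> {}" using n by (simp add: I_def tensor_idx_nonempty)
  have "(2::real) \<le> real (\<Prod>i<d. n i)" using N by (metis of_nat_le_iff of_nat_numeral)
  then have card: "2 \<le> real (card I)" by (simp add: I_def card_tensor_idx)
  have "(\<Sum>i<d. ln (real (n i))) = ln (real (card I))"
    using n by (simp add: I_def card_tensor_idx, subst ln_prod) auto
  then have t: "0 < t" and "t\<^sup>2 = 2 * ln (real (card I))"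
    using card by (simp_all add: t_def)
  then have exp_t: "exp (- t\<^sup>2 / 2) = 1 / real (card I)"
    using card by (simp add: exp_minus inverse_eq_divide)
  have S: "distributed P lborel S (\<lambda>x. ennreal (std_normal_density x))"
    unfolding P S_def by (rule distributed_PiM_normalised_sum[OF finI neI])
  have entry: "distributed P lborel (\<lambda>Z. Z idx) (\<lambda>x. ennreal (std_normal_density x))"
    if "idx \<in> I" for idx
    unfolding P using that by (rule distributed_PiM_component_std_normal)
  define A where "A = {Z \<in> space P. W \<le> S Z}"
  define B where "B = (\<Union>idx\<in>I. {Z \<in> space P. t \<le> Z idx})"
  have B_sets: "{Z \<in> space P. t \<le> Z idx} \<in> sets P" if "idx \<in> I" for idx
    using measurable_sets_le_ge(1)[OF distributed_measurable[OF entry[OF that]]] .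
  have AB: "A \<in> sets P" "B \<in> sets P"
    using measurable_sets_le_ge(1)[OF distributed_measurable[OF S]] finI B_sets
    by (auto simp: A_def B_def)
  have "{Z \<in> space P. psi_c d n W Z} \<subseteq> A \<union> B"
    using finI neI
    by (auto simp: psi_c_def psi_sum_def psi_max_def A_def B_def S_def I_def t_def
        sqrt_prod_eq_sqrt_card_tensor_idx Max_gr_iff less_imp_le)
  then have "measure P {Z \<in> space P. psi_c d n W Z} \<le> measure P A + measure P B"
    using AB by (meson finite_measure_mono measure_Un_le order_trans sets.Un)
  also have "measure P A \<le> 1 / W"
    unfolding A_def by (rule std_normal_tail_le_inverse(1)[OF prob_space_axioms S W])
  also have "measure P B \<le> (\<Sum>idx\<in>I. measure P {Z \<in> space P. t \<le> Z idx})"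
    unfolding B_def by (rule measure_UNION_le[OF finI B_sets])
  also have "\<dots> \<le> (\<Sum>idx\<in>I. exp (- t\<^sup>2 / 2) / t)"
    by (intro sum_mono std_normal_upper_tail_le[OF prob_space_axioms entry t])
  also have "\<dots> = 1 / t"
    unfolding exp_t using card by simp
  finally show ?thesis by (simp add: P_def t_def)
qed

lemma chc_classE:
  assumes "X \<in> chc_class d k n lam"
  obtains S lam' where "lam \<le> lam'" "\<forall>i<d. S i \<subseteq> {..<n i} \<and> card (S i) = k i"
    "X = (\<lambda>idx. if \<forall>i<d. idx i \<in> S i then lam' else 0)"
  using assms unfolding chc_class_def by blast

lemma sum_block_indicator:
  assumes "\<forall>i<d. S i \<subseteq> {..<n i} \<and> card (S i) = k i"
  shows "(\<Sum>idx\<in>tensor_idx d n. if \<forall>i<d. idx i \<in> S i then c else 0) = c * (\<Prod>i<d. real (k i))"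
proof -
  have "{idx \<in> tensor_idx d n. \<forall>i<d. idx i \<in> S i} = PiE {..<d} S"
    using assms by (auto simp: tensor_idx_def PiE_iff extensional_def)
  then show ?thesis
    using assms by (simp add: sum.inter_filter[OF finite_tensor_idx, symmetric] card_PiE)
qed

lemma miss_prob_le_sum_test:
  assumes n: "\<forall>i<d. 1 \<le> n i" and X: "X \<in> chc_class d k n lam"
    and W: "W < sum_signal d k n lam"
  shows "miss_prob d n W X \<le> 1 / (sum_signal d k n lam - W)"
proof -
  define I where "I = tensor_idx d n"
  define P where "P = gauss_tensor d n"
  define q where "q = sum_signal d k n lam"
  define sN where "sN = sqrt (real (card I))"
  define S where "S = (\<lambda>Z::(nat \<Rightarrow> nat) \<Rightarrow> real. (\<Sum>idx\<in>I. Z idx) / sN)"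
  interpret prob_space P unfolding P_def by (rule prob_space_gauss_tensor)
  have finI: "finite I" by (simp add: I_def finite_tensor_idx)
  have neI: "I \<noteq> {}" using n by (simp add: I_def tensor_idx_nonempty)
  have sN: "0 < sN" "sqrt (\<Prod>i<d. real (n i)) = sN"
    using finI neI by (simp_all add: sN_def I_def card_gt_0_iff sqrt_prod_eq_sqrt_card_tensor_idx)
  obtain B lam' where lam': "lam \<le> lam'" and B: "\<forall>i<d. B i \<subseteq> {..<n i} \<and> card (B i) = k i"
    and X_eq: "X = (\<lambda>idx. if \<forall>i<d. idx i \<in> B i then lam' else 0)"
    using X by (rule chc_classE)
  have q_le: "q \<le> lam' * (\<Prod>i<d. real (k i)) / sN"
    unfolding q_def sN(2) using lam' sN(1)
    by (intro divide_right_mono mult_right_mono) (auto simp: prod_nonneg)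
  have S: "distributed P lborel S (\<lambda>x. ennreal (std_normal_density x))"
    unfolding P_def I_def S_def sN_def gauss_tensor_eq
    by (rule distributed_PiM_normalised_sum[OF finI[unfolded I_def] neI[unfolded I_def]])
  have "{Z \<in> space P. \<not> psi_c d n W (\<lambda>idx. X idx + Z idx)} \<subseteq> {Z \<in> space P. S Z \<le> - (q - W)}"
  proof safe
    fix Z assume "\<not> psi_c d n W (\<lambda>idx. X idx + Z idx)"
    then have "(\<Sum>idx\<in>I. X idx + Z idx) / sN \<le> W"
      by (simp add: psi_c_def psi_sum_def sN I_def)
    moreover have "(\<Sum>idx\<in>I. X idx + Z idx) = lam' * (\<Prod>i<d. real (k i)) + (\<Sum>idx\<in>I. Z idx)"
      unfolding sum.distrib X_eq I_def using sum_block_indicator[OF B] by simp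
    ultimately show "S Z \<le> - (q - W)"
      using q_le unfolding S_def by (simp add: add_divide_distrib)
  qed
  then have "measure P {Z \<in> space P. \<not> psi_c d n W (\<lambda>idx. X idx + Z idx)}
      \<le> measure P {Z \<in> space P. S Z \<le> - (q - W)}"
    by (rule finite_measure_mono[OF _ measurable_sets_le_ge(2)[OF distributed_measurable[OF S]]])
  also have "\<dots> \<le> 1 / (q - W)"
    using W by (intro std_normal_tail_le_inverse(2)[OF prob_space_axioms S]) (simp add: q_def)
  finally show ?thesis by (simp add: P_def q_def)
qed

lemma miss_prob_le_max_test:
  assumes k: "\<forall>i<d. 1 \<le> k i" and X: "X \<in> chc_class d k n lam"
    and lam: "max_threshold d n < lam"
  shows "miss_prob d n W X \<le> 1 / (lam - max_threshold d n)"
proof -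
  define I where "I = tensor_idx d n"
  define P where "P = gauss_tensor d n"
  define t where "t = max_threshold d n"
  interpret prob_space P unfolding P_def by (rule prob_space_gauss_tensor)
  obtain B lam' where lam': "lam \<le> lam'" and B: "\<forall>i<d. B i \<subseteq> {..<n i} \<and> card (B i) = k i"
    and X_eq: "X = (\<lambda>idx. if \<forall>i<d. idx i \<in> B i then lam' else 0)"
    using X by (rule chc_classE)
  have "\<forall>i\<in>{..<d}. B i \<noteq> {}" using B k by (metis card.empty lessThan_iff not_one_le_zero)
  then obtain idx0 where idx0: "idx0 \<in> PiE {..<d} B"
    by (metis PiE_eq_empty_iff ex_in_conv)
  have idx0_I: "idx0 \<in> I" and X_idx0: "X idx0 = lam'"
    using idx0 B by (auto simp: I_def tensor_idx_def PiE_iff X_eq)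
  have entry: "distributed P lborel (\<lambda>Z. Z idx0) (\<lambda>x. ennreal (std_normal_density x))"
    unfolding P_def I_def gauss_tensor_eq
    using idx0_I[unfolded I_def] by (rule distributed_PiM_component_std_normal)
  have "{Z \<in> space P. \<not> psi_c d n W (\<lambda>idx. X idx + Z idx)} \<subseteq> {Z \<in> space P. Z idx0 \<le> - (lam - t)}"
  proof safe
    fix Z assume "\<not> psi_c d n W (\<lambda>idx. X idx + Z idx)"
    then have "Max ((\<lambda>idx. X idx + Z idx) ` I) \<le> t"
      by (simp add: psi_c_def psi_max_def I_def t_def)
    moreover have "X idx0 + Z idx0 \<le> Max ((\<lambda>idx. X idx + Z idx) ` I)"
      using idx0_I by (intro Max_ge) (auto simp: I_def finite_tensor_idx)
    ultimately show "Z idx0 \<le> - (lam - t)" using X_idx0 lam' by linarith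
  qed
  then have "measure P {Z \<in> space P. \<not> psi_c d n W (\<lambda>idx. X idx + Z idx)}
      \<le> measure P {Z \<in> space P. Z idx0 \<le> - (lam - t)}"
    by (rule finite_measure_mono[OF _ measurable_sets_le_ge(2)[OF distributed_measurable[OF entry]]])
  also have "\<dots> \<le> 1 / (lam - t)"
    using lam by (intro std_normal_tail_le_inverse(2)[OF prob_space_axioms entry]) (simp add: t_def)
  finally show ?thesis by (simp add: P_def t_def)
qed

lemma chc_risk_le:
  assumes k: "\<forall>i<d. 1 \<le> k i \<and> k i \<le> n i" and N: "2 \<le> (\<Prod>i<d. n i)" and W: "0 < W"
    and miss: "\<And>X. X \<in> chc_class d k n lam \<Longrightarrow> miss_prob d n W X \<le> A"
  shows "0 \<le> chc_risk d k n lam W"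
    and "chc_risk d k n lam W \<le> 1 / W + 1 / max_threshold d n + A"
proof -
  interpret prob_space "gauss_tensor d n" by (rule prob_space_gauss_tensor)
  define X0 where "X0 = (\<lambda>idx::nat\<Rightarrow>nat. if \<forall>i<d. idx i \<in> {..<k i} then lam else 0)"
  have X0: "X0 \<in> chc_class d k n lam"
    unfolding chc_class_def X0_def using k by (intro CollectI exI[of _ "\<lambda>i. {..<k i}"] exI[of _ lam]) auto
  have bdd: "bdd_above (miss_prob d n W ` chc_class d k n lam)"
    by (rule bdd_aboveI[of _ 1]) auto
  have "0 \<le> miss_prob d n W X0" by simp
  also have "\<dots> \<le> Sup (miss_prob d n W ` chc_class d k n lam)"
    using bdd X0 by (intro cSup_upper) auto
  finally show "0 \<le> chc_risk d k n lam W" by (simp add: chc_risk_def)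
  have "Sup (miss_prob d n W ` chc_class d k n lam) \<le> A"
    using X0 by (intro cSup_least) (auto simp: miss)
  moreover have "false_alarm_prob d n W \<le> 1 / W + 1 / max_threshold d n"
    using k N W by (intro false_alarm_prob_le) (auto intro: le_trans)
  ultimately show "chc_risk d k n lam W \<le> 1 / W + 1 / max_threshold d n + A"
    by (simp add: chc_risk_def)
qed

lemma max_threshold_at_top:
  assumes n: "eventually (\<lambda>m. \<forall>i<d. 1 \<le> n i m) F"
    and N: "filterlim (\<lambda>m. \<Prod>i<d. real (n i m)) at_top F"
  shows "filterlim (\<lambda>m. max_threshold d (\<lambda>i. n i m)) at_top F"
proof (rule filterlim_at_top_mono)
  show "filterlim (\<lambda>m. sqrt (2 * ln (\<Prod>i<d. real (n i m)))) at_top F"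
    by (intro filterlim_compose[OF sqrt_at_top] filterlim_tendsto_pos_mult_at_top[OF tendsto_const]
        filterlim_compose[OF ln_at_top N]) simp
  show "eventually (\<lambda>m. sqrt (2 * ln (\<Prod>i<d. real (n i m))) \<le> max_threshold d (\<lambda>i. n i m)) F"
    using n by eventually_elim (subst ln_prod, auto)
qed

lemma chc_risk_tendsto_0_of_miss_bound:
  assumes sizes: "eventually (\<lambda>m. \<forall>i<d. 1 \<le> k i m \<and> k i m \<le> n i m) sequentially"
    and N: "filterlim (\<lambda>m. \<Prod>i<d. real (n i m)) at_top sequentially"
    and W: "filterlim W at_top sequentially"
    and A: "(A \<longlongrightarrow> 0) sequentially"
    and miss: "eventually (\<lambda>m. \<forall>X\<in>chc_class d (\<lambda>i. k i m) (\<lambda>i. n i m) (lam m).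
                 miss_prob d (\<lambda>i. n i m) (W m) X \<le> A m) sequentially"
  shows "((\<lambda>m. chc_risk d (\<lambda>i. k i m) (\<lambda>i. n i m) (lam m) (W m)) \<longlongrightarrow> 0) sequentially"
proof (rule tendsto_sandwich)
  have n: "eventually (\<lambda>m. \<forall>i<d. 1 \<le> n i m) sequentially"
    using sizes by eventually_elim (auto intro: le_trans)
  have "eventually (\<lambda>m. (2::real) \<le> real (\<Prod>i<d. n i m)) sequentially"
    using N by (simp add: filterlim_at_top)
  then have N2: "eventually (\<lambda>m. 2 \<le> (\<Prod>i<d. n i m)) sequentially"
    by eventually_elim linarith
  have W_pos: "eventually (\<lambda>m. 0 < W m) sequentially"
    using W by (simp add: filterlim_at_top_dense)
  note risk = chc_risk_le[where k="\<lambda>i. k i m" and n="\<lambda>i. n i m" and W="W m" and A="A m" for m]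
  show "eventually (\<lambda>m. 0 \<le> chc_risk d (\<lambda>i. k i m) (\<lambda>i. n i m) (lam m) (W m)) sequentially"
    using sizes N2 W_pos miss by eventually_elim (rule risk(1); blast)
  show "eventually (\<lambda>m. chc_risk d (\<lambda>i. k i m) (\<lambda>i. n i m) (lam m) (W m)
      \<le> 1 / W m + 1 / max_threshold d (\<lambda>i. n i m) + A m) sequentially"
    using sizes N2 W_pos miss by eventually_elim (rule risk(2); blast)
  have "((\<lambda>m. inverse (W m) + inverse (max_threshold d (\<lambda>i. n i m)) + A m) \<longlongrightarrow> 0 + 0 + 0) sequentially"
    by (intro tendsto_add tendsto_inverse_0_at_top W max_threshold_at_top[OF n N] A)
  then show "((\<lambda>m. 1 / W m + 1 / max_threshold d (\<lambda>i. n i m) + A m) \<longlongrightarrow> 0) sequentially"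
    by (simp add: inverse_eq_divide)
qed (rule tendsto_const)

lemma chc_risk_tendsto_0_sum_test:
  assumes sizes: "eventually (\<lambda>m. \<forall>i<d. 1 \<le> k i m \<and> k i m \<le> n i m) sequentially"
    and N: "filterlim (\<lambda>m. \<Prod>i<d. real (n i m)) at_top sequentially"
    and W: "filterlim W at_top sequentially"
    and q: "filterlim (\<lambda>m. sum_signal d (\<lambda>i. k i m) (\<lambda>i. n i m) (lam m)) at_top sequentially"
    and c: "c < 1" and W_le: "eventually (\<lambda>m. W m \<le> c * sum_signal d (\<lambda>i. k i m) (\<lambda>i. n i m) (lam m)) sequentially"
  shows "((\<lambda>m. chc_risk d (\<lambda>i. k i m) (\<lambda>i. n i m) (lam m) (W m)) \<longlongrightarrow> 0) sequentially"
proof -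
  define q where "q m = sum_signal d (\<lambda>i. k i m) (\<lambda>i. n i m) (lam m)" for m
  have gap: "filterlim (\<lambda>m. q m - W m) at_top sequentially"
  proof (rule filterlim_at_top_mono)
    show "filterlim (\<lambda>m. (1 - c) * q m) at_top sequentially"
      using c q by (intro filterlim_tendsto_pos_mult_at_top[OF tendsto_const]) (simp_all add: q_def)
    show "eventually (\<lambda>m. (1 - c) * q m \<le> q m - W m) sequentially"
      using W_le by eventually_elim (simp only: q_def left_diff_distrib mult_1_left; linarith)
  qed
  have gap_pos: "eventually (\<lambda>m. 0 < q m - W m) sequentially"
    using gap unfolding filterlim_at_top_dense by blast
  show ?thesis
  proof (rule chc_risk_tendsto_0_of_miss_bound[OF sizes N W])
    show "((\<lambda>m. 1 / (q m - W m)) \<longlongrightarrow> 0) sequentially"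
      using tendsto_inverse_0_at_top[OF gap] by (simp add: inverse_eq_divide)
    show "eventually (\<lambda>m. \<forall>X\<in>chc_class d (\<lambda>i. k i m) (\<lambda>i. n i m) (lam m).
        miss_prob d (\<lambda>i. n i m) (W m) X \<le> 1 / (q m - W m)) sequentially"
      using sizes gap_pos
    proof eventually_elim
      case (elim m)
      then show ?case
        by (auto simp: q_def intro!: miss_prob_le_sum_test intro: le_trans)
    qed
  qed
qed

lemma chc_risk_tendsto_0_max_test:
  assumes sizes: "eventually (\<lambda>m. \<forall>i<d. 1 \<le> k i m \<and> k i m \<le> n i m) sequentially"
    and N: "filterlim (\<lambda>m. \<Prod>i<d. real (n i m)) at_top sequentially"
    and W: "filterlim W at_top sequentially"
    and r: "1 < r" and lam: "eventually (\<lambda>m. r * max_threshold d (\<lambda>i. n i m) \<le> lam m) sequentially"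
  shows "((\<lambda>m. chc_risk d (\<lambda>i. k i m) (\<lambda>i. n i m) (lam m) (W m)) \<longlongrightarrow> 0) sequentially"
proof -
  define t where "t m = max_threshold d (\<lambda>i. n i m)" for m
  have t: "filterlim t at_top sequentially"
    unfolding t_def
    using sizes N by (intro max_threshold_at_top) (auto elim!: eventually_mono intro: le_trans)
  have gap: "filterlim (\<lambda>m. lam m - t m) at_top sequentially"
  proof (rule filterlim_at_top_mono)
    show "filterlim (\<lambda>m. (r - 1) * t m) at_top sequentially"
      using r by (intro filterlim_tendsto_pos_mult_at_top[OF tendsto_const _ t]) simp
    show "eventually (\<lambda>m. (r - 1) * t m \<le> lam m - t m) sequentially"
      using lam by eventually_elim (simp add: t_def algebra_simps)
  qed
  have gap_pos: "eventually (\<lambda>m. 0 < lam m - t m) sequentially"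
    using gap unfolding filterlim_at_top_dense by blast
  show ?thesis
  proof (rule chc_risk_tendsto_0_of_miss_bound[OF sizes N W])
    show "((\<lambda>m. 1 / (lam m - t m)) \<longlongrightarrow> 0) sequentially"
      using tendsto_inverse_0_at_top[OF gap] by (simp add: inverse_eq_divide)
    show "eventually (\<lambda>m. \<forall>X\<in>chc_class d (\<lambda>i. k i m) (\<lambda>i. n i m) (lam m).
        miss_prob d (\<lambda>i. n i m) (W m) X \<le> 1 / (lam m - t m)) sequentially"
      using sizes gap_pos
    proof eventually_elim
      case (elim m)
      then show ?case
        by (auto simp: t_def intro!: miss_prob_le_max_test[where k="\<lambda>i. k i m"])
    qed
  qed
qed

lemma filterlim_prod_at_top:
  fixes f :: "'i \<Rightarrow> 'a \<Rightarrow> real"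
  assumes I: "finite I" "j \<in> I" and f: "filterlim (f j) at_top F"
    and ge_1: "eventually (\<lambda>m. \<forall>i\<in>I. 1 \<le> f i m) F"
  shows "filterlim (\<lambda>m. \<Prod>i\<in>I. f i m) at_top F"
proof (rule filterlim_at_top_mono[OF f])
  show "eventually (\<lambda>m. f j m \<le> (\<Prod>i\<in>I. f i m)) F"
    using ge_1
  proof eventually_elim
    case (elim m)
    have "f j m * 1 \<le> f j m * (\<Prod>i\<in>I - {j}. f i m)"
      using elim I by (intro mult_left_mono prod_ge_1) force+
    then show ?case using I by (simp add: prod.remove)
  qed
qed

section \<open>Regime (A1)\<close>

lemma regime_A1_eventually_sizes:
  assumes "regime_A1 d n k"
  shows "eventually (\<lambda>m. \<forall>i<d. 1 \<le> k i m \<and> k i m \<le> n i m) sequentially"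
proof -
  have "eventually (\<lambda>m. 1 \<le> k i m \<and> k i m \<le> n i m) sequentially" if "i < d" for i
  proof -
    have k: "filterlim (\<lambda>m. real (k i m)) at_top sequentially"
      and n: "filterlim (\<lambda>m. real (n i m)) at_top sequentially"
      and kn: "((\<lambda>m. real (k i m) / real (n i m)) \<longlongrightarrow> 0) sequentially"
      using assms that by (auto simp: regime_A1_def)
    have "eventually (\<lambda>m. 1 \<le> real (k i m)) sequentially"
      and "eventually (\<lambda>m. 1 \<le> real (n i m)) sequentially"
      using k n unfolding filterlim_at_top by blast+
    moreover have "eventually (\<lambda>m. real (k i m) / real (n i m) < 1) sequentially"
      using kn by (rule order_tendstoD(2)) simp
    ultimately have "eventually (\<lambda>m. 1 \<le> real (k i m) \<and> 1 \<le> real (n i m)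
        \<and> real (k i m) / real (n i m) < 1) sequentially"
      by eventually_elim blast
    then show ?thesis
      by eventually_elim (auto simp: divide_less_eq)
  qed
  then have "eventually (\<lambda>m. \<forall>i\<in>{..<d}. 1 \<le> k i m \<and> k i m \<le> n i m) sequentially"
    by (intro eventually_ball_finite) auto
  then show ?thesis by (rule eventually_mono) auto
qed

lemma liminf_ratio_gt_1_imp_eventually_le:
  fixes f g :: "nat \<Rightarrow> real"
  assumes liminf: "1 < liminf (\<lambda>m. ereal (f m / g m))" and g: "\<And>m. 0 \<le> g m"
  obtains r where "1 < r" "eventually (\<lambda>m. r * g m \<le> f m) sequentially"
proof -
  obtain z where z: "1 < z" "z < liminf (\<lambda>m. ereal (f m / g m))"
    using dense[OF liminf] by blast
  then obtain r where r: "z = ereal r" by (cases z) auto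
  have "eventually (\<lambda>m. r < f m / g m) sequentially"
    using less_LiminfD[OF z(2)] r by simp
  then have "eventually (\<lambda>m. r * g m \<le> f m) sequentially"
  proof eventually_elim
    case (elim m)
    have "r > 0" using z r by simp
    \<comment> \<open>\<open>f m / 0 = 0\<close> in HOL, and \<open>0 < r\<close>.\<close>
    then have "g m \<noteq> 0" using elim by auto
    then show ?case using elim g[of m] by (simp add: less_divide_eq mult.commute)
  qed
  then show ?thesis using that z r by simp
qed

lemma chc_risk_tendsto_0_A1:
  fixes n k :: "nat \<Rightarrow> nat \<Rightarrow> nat" and lam W :: "nat \<Rightarrow> real"
  assumes d: "1 \<le> d" and A1: "regime_A1 d n k" and W: "filterlim W at_top sequentially"
    and cond: "(filterlim (\<lambda>m. sum_signal d (\<lambda>i. k i m) (\<lambda>i. n i m) (lam m)) at_top sequentially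
          \<and> (\<exists>c::real. 0 < c \<and> c < 1 \<and>
               (\<forall>m. W m \<le> sum_signal d (\<lambda>i. k i m) (\<lambda>i. n i m) (c * lam m))))
       \<or> liminf (\<lambda>m. ereal (lam m / max_threshold d (\<lambda>i. n i m))) > 1"
  shows "((\<lambda>m. chc_risk d (\<lambda>i. k i m) (\<lambda>i. n i m) (lam m) (W m)) \<longlongrightarrow> 0) sequentially"
proof -
  have sizes: "eventually (\<lambda>m. \<forall>i<d. 1 \<le> k i m \<and> k i m \<le> n i m) sequentially"
    using A1 by (rule regime_A1_eventually_sizes)
  have N: "filterlim (\<lambda>m. \<Prod>i<d. real (n i m)) at_top sequentially"
    using d A1 sizes
    by (intro filterlim_prod_at_top[where j=0]) (auto simp: regime_A1_def elim!: eventually_mono)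
  from cond show ?thesis
  proof (elim disjE conjE exE)
    fix c :: real
    assume q: "filterlim (\<lambda>m. sum_signal d (\<lambda>i. k i m) (\<lambda>i. n i m) (lam m)) at_top sequentially"
      and "c < 1" and W_le: "\<forall>m. W m \<le> sum_signal d (\<lambda>i. k i m) (\<lambda>i. n i m) (c * lam m)"
    show ?thesis
      using W_le by (intro chc_risk_tendsto_0_sum_test[OF sizes N W q \<open>c < 1\<close>]) (simp add: mult.assoc)
  next
    have ln_of_nat_nonneg: "0 \<le> ln (real j)" for j :: nat
      by (cases j) auto
    assume "liminf (\<lambda>m. ereal (lam m / max_threshold d (\<lambda>i. n i m))) > 1"
    then obtain r where "1 < r" "eventually (\<lambda>m. r * max_threshold d (\<lambda>i. n i m) \<le> lam m) sequentially"
      using ln_of_nat_nonneg by (elim liminf_ratio_gt_1_imp_eventually_le) (simp add: sum_nonneg)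
    then show ?thesis by (rule chc_risk_tendsto_0_max_test[OF sizes N W])
  qed
qed

section \<open>Regime (A2)\<close>

lemma filterlim_at_top_of_ln_ratio:
  fixes f L :: "'a \<Rightarrow> real"
  assumes ratio: "((\<lambda>m. ln (f m) / L m) \<longlongrightarrow> c) F" and c: "0 < c"
    and L: "filterlim L at_top F" and f: "eventually (\<lambda>m. 0 < f m) F"
  shows "filterlim f at_top F"
proof -
  have "eventually (\<lambda>m. 0 < L m) F"
    using L unfolding filterlim_at_top_dense by blast
  then have "eventually (\<lambda>m. ln (f m) / L m * L m = ln (f m)) F"
    by eventually_elim simp
  moreover have "filterlim (\<lambda>m. ln (f m) / L m * L m) at_top F"
    by (rule filterlim_tendsto_pos_mult_at_top[OF ratio c L])
  ultimately have "filterlim (\<lambda>m. ln (f m)) at_top F"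
    by (rule filterlim_cong[OF refl refl, THEN iffD1])
  then have "filterlim (\<lambda>m. exp (ln (f m))) at_top F"
    by (rule filterlim_compose[OF exp_at_top])
  moreover have "eventually (\<lambda>m. exp (ln (f m)) = f m) F"
    using f by eventually_elim simp
  ultimately show ?thesis
    by (rule filterlim_cong[OF refl refl, THEN iffD1, rotated])
qed

lemma ln_sum_signal:
  assumes "0 < lam" "\<forall>i<d. 0 < k i" "\<forall>i<d. 0 < n i"
  shows "ln (sum_signal d k n lam) = ln lam + (\<Sum>i<d. ln (real (k i))) - (\<Sum>i<d. ln (real (n i))) / 2"
proof -
  have "ln (\<Prod>i<d. real (k i)) = (\<Sum>i<d. ln (real (k i)))"
    and "ln (\<Prod>i<d. real (n i)) = (\<Sum>i<d. ln (real (n i)))"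
    using assms by (auto intro!: ln_prod)
  moreover have "0 < (\<Prod>i<d. real (k i))" "0 < (\<Prod>i<d. real (n i))"
    using assms by (auto intro: prod_pos)
  ultimately show ?thesis
    using assms by (simp add: ln_div ln_mult ln_sqrt)
qed

lemma regime_A2_prod_at_top:
  assumes d: "1 \<le> d" and A2: "regime_A2 d \<alpha> \<beta> N n k lam"
  shows "filterlim (\<lambda>m. \<Prod>i<d. real (n i m)) at_top sequentially"
proof (rule filterlim_prod_at_top[where j=0])
  have n: "\<forall>m. \<forall>i<d. 1 \<le> n i m"
    using A2 by (auto simp: regime_A2_def intro: le_trans)
  then show "eventually (\<lambda>m. \<forall>i\<in>{..<d}. 1 \<le> real (n i m)) sequentially"
    by simp
  have "filterlim (\<lambda>m. real (N m)) at_top sequentially"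
    using A2 by (simp add: regime_A2_def)
  then have "filterlim (\<lambda>m. ln (real (N m))) at_top sequentially"
    by (rule filterlim_compose[OF ln_at_top])
  moreover have "((\<lambda>m. ln (real (n 0 m)) / ln (real (N m))) \<longlongrightarrow> 1) sequentially"
    using A2 d unfolding regime_A2_def by simp
  ultimately show "filterlim (\<lambda>m. real (n 0 m)) at_top sequentially"
    using n d by (rule_tac filterlim_at_top_of_ln_ratio[where c=1]) (auto simp: Suc_le_eq)
qed (use d in auto)

lemma regime_A2_sum_signal_at_top:
  assumes A2: "regime_A2 d \<alpha> \<beta> N n k lam" and \<beta>: "\<beta> < real d * \<alpha> - real d / 2"
  shows "filterlim (\<lambda>m. sum_signal d (\<lambda>i. k m) (\<lambda>i. n i m) (lam m)) at_top sequentially"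
proof (rule filterlim_at_top_of_ln_ratio)
  define L where "L m = ln (real (N m))" for m
  have n: "\<And>i. i < d \<Longrightarrow> ((\<lambda>m. ln (real (n i m)) / L m) \<longlongrightarrow> 1) sequentially"
    and k: "((\<lambda>m. ln (real (k m)) / L m) \<longlongrightarrow> \<alpha>) sequentially"
    and lam: "((\<lambda>m. ln (1 / lam m) / L m) \<longlongrightarrow> \<beta>) sequentially"
    and sizes: "\<And>m. 1 \<le> k m \<and> (\<forall>i<d. k m \<le> n i m) \<and> 0 < lam m"
    and N: "filterlim (\<lambda>m. real (N m)) at_top sequentially"
    using A2 by (auto simp: regime_A2_def L_def)
  show "filterlim L at_top sequentially"
    unfolding L_def by (rule filterlim_compose[OF ln_at_top N])
  have ln_signal: "ln (sum_signal d (\<lambda>i. k m) (\<lambda>i. n i m) (lam m)) / L m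
      = - (ln (1 / lam m) / L m) + real d * (ln (real (k m)) / L m) - (\<Sum>i<d. ln (real (n i m)) / L m) / 2"
    for m
  proof -
    have "ln (sum_signal d (\<lambda>i. k m) (\<lambda>i. n i m) (lam m))
        = - ln (1 / lam m) + real d * ln (real (k m)) - (\<Sum>i<d. ln (real (n i m))) / 2"
      using sizes[of m] by (subst ln_sum_signal) (auto simp: ln_div intro: order.strict_trans2)
    then show ?thesis
      by (simp add: diff_divide_distrib add_divide_distrib sum_divide_distrib mult.commute)
  qed
  have "((\<lambda>m. - (ln (1 / lam m) / L m) + real d * (ln (real (k m)) / L m)
      - (\<Sum>i<d. ln (real (n i m)) / L m) / 2) \<longlongrightarrow> - \<beta> + real d * \<alpha> - (\<Sum>i<d. 1) / 2) sequentially"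
    by (intro tendsto_intros lam k n) auto
  also have "- \<beta> + real d * \<alpha> - (\<Sum>i<d. 1) / 2 = real d * \<alpha> - real d / 2 - \<beta>"
    by simp
  finally show "((\<lambda>m. ln (sum_signal d (\<lambda>i. k m) (\<lambda>i. n i m) (lam m)) / L m)
      \<longlongrightarrow> real d * \<alpha> - real d / 2 - \<beta>) sequentially"
    unfolding ln_signal .
  show "0 < real d * \<alpha> - real d / 2 - \<beta>"
    using \<beta> by simp
  have "0 < k m" "\<forall>i<d. 0 < n i m" for m
    using sizes[of m] by auto
  then show "eventually (\<lambda>m. 0 < sum_signal d (\<lambda>i. k m) (\<lambda>i. n i m) (lam m)) sequentially"
    using sizes by (auto intro!: always_eventually divide_pos_pos mult_pos_pos prod_pos)
qed

lemma regime_A2_max_test_condition: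
  assumes d: "1 \<le> d" and A2: "regime_A2 d \<alpha> \<beta> N n k lam" and \<beta>: "\<beta> < 0"
  shows "eventually (\<lambda>m. 2 * max_threshold d (\<lambda>i. n i m) \<le> lam m) sequentially"
proof -
  define L where "L m = ln (real (N m))" for m
  define g where "g = - \<beta> / 2"
  have n: "\<And>i. i < d \<Longrightarrow> ((\<lambda>m. ln (real (n i m)) / L m) \<longlongrightarrow> 1) sequentially"
    and lam: "((\<lambda>m. ln (1 / lam m) / L m) \<longlongrightarrow> \<beta>) sequentially"
    and lam_pos: "\<And>m. 0 < lam m"
    and N: "filterlim (\<lambda>m. real (N m)) at_top sequentially"
    using A2 by (auto simp: regime_A2_def L_def)
  have L: "filterlim L at_top sequentially"
    unfolding L_def by (rule filterlim_compose[OF ln_at_top N])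
  then have L_pos: "eventually (\<lambda>m. 0 < L m) sequentially"
    by (simp add: filterlim_at_top_dense)
  have "eventually (\<lambda>m. \<forall>i\<in>{..<d}. ln (real (n i m)) / L m < 2) sequentially"
    by (intro eventually_ball_finite ballI order_tendstoD(2)[OF n]) auto
  then have n_le: "eventually (\<lambda>m. \<forall>i\<in>{..<d}. ln (real (n i m)) \<le> 2 * L m) sequentially"
    using L_pos by eventually_elim (auto simp: divide_less_eq less_imp_le)
  have "eventually (\<lambda>m. ln (1 / lam m) / L m < \<beta> / 2) sequentially"
    using \<beta> by (intro order_tendstoD(2)[OF lam]) simp
  then have lam_ge: "eventually (\<lambda>m. exp (g * L m) < lam m) sequentially"
    using L_pos
  proof eventually_elim
    case (elim m)
    then have "ln (1 / lam m) < \<beta> / 2 * L m"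
      by (simp only: pos_divide_less_eq)
    moreover have "ln (1 / lam m) = - ln (lam m)" and "g * L m = - (\<beta> / 2 * L m)"
      using lam_pos[of m] by (simp_all add: ln_div g_def)
    ultimately have "g * L m < ln (lam m)"
      by linarith
    then show ?case
      using lam_pos[of m] by (metis exp_less_cancel_iff exp_ln)
  qed
  \<comment> \<open>\<open>\<lambda>\<close> grows like \<open>N\<^sup>g\<close> while the threshold is only of order \<open>sqrt (ln N)\<close>.\<close>
  have "((\<lambda>x. sqrt (4 * real d * x) / exp (g * x)) \<longlongrightarrow> 0) at_top"
    using d \<beta> unfolding g_def by real_asymp
  then have "eventually (\<lambda>m. sqrt (4 * real d * L m) / exp (g * L m) < 1 / 2) sequentially"
    by (intro eventually_compose_filterlim[OF _ L] order_tendstoD(2)) auto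
  with n_le lam_ge show ?thesis
  proof eventually_elim
    case (elim m)
    have "2 * (\<Sum>i<d. ln (real (n i m))) \<le> 2 * (\<Sum>i<d. 2 * L m)"
      using elim(1) by (intro mult_left_mono sum_mono) auto
    then have "max_threshold d (\<lambda>i. n i m) \<le> sqrt (4 * real d * L m)"
      by (simp add: real_sqrt_le_mono algebra_simps)
    moreover have "2 * sqrt (4 * real d * L m) < exp (g * L m)"
      using elim(3) by (simp add: divide_less_eq)
    ultimately show ?case using elim(2) by linarith
  qed
qed

lemma chc_reliable_A2:
  assumes d: "1 \<le> d" and A2: "regime_A2 d \<alpha> \<beta> N n k lam"
    and \<beta>: "\<beta> < max (real d * \<alpha> - real d / 2) 0"
  shows "\<exists>W. filterlim W at_top sequentially \<and>
           ((\<lambda>m. chc_risk d (\<lambda>i. k m) (\<lambda>i. n i m) (lam m) (W m)) \<longlongrightarrow> 0) sequentially"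
proof -
  have sizes: "eventually (\<lambda>m. \<forall>i<d. 1 \<le> k m \<and> k m \<le> n i m) sequentially"
    using A2 by (simp add: regime_A2_def)
  note N = regime_A2_prod_at_top[OF d A2]
  show ?thesis
  proof (cases "\<beta> < 0")
    case True
    have "((\<lambda>m. chc_risk d (\<lambda>i. k m) (\<lambda>i. n i m) (lam m) (real m)) \<longlongrightarrow> 0) sequentially"
      by (rule chc_risk_tendsto_0_max_test[OF sizes N filterlim_real_sequentially _
            regime_A2_max_test_condition[OF d A2 True]]) simp
    then show ?thesis using filterlim_real_sequentially by blast
  next
    case False
    define q where "q m = sum_signal d (\<lambda>i. k m) (\<lambda>i. n i m) (lam m)" for m
    have q: "filterlim q at_top sequentially"
      unfolding q_def using False \<beta> by (intro regime_A2_sum_signal_at_top[OF A2]) simp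
    then have W: "filterlim (\<lambda>m. q m / 2) at_top sequentially"
      by (intro filterlim_tendsto_pos_mult_at_top[OF tendsto_const, of "1/2", simplified]) auto
    have "((\<lambda>m. chc_risk d (\<lambda>i. k m) (\<lambda>i. n i m) (lam m) (q m / 2)) \<longlongrightarrow> 0) sequentially"
      by (rule chc_risk_tendsto_0_sum_test[OF sizes N W q[unfolded q_def], of "1/2"])
        (simp_all add: q_def)
    then show ?thesis using W by blast
  qed
qed

theorem mainTheorem7:
  fixes d :: nat
  assumes "1 \<le> d"
  shows
   "(\<forall>(n :: nat \<Rightarrow> nat \<Rightarrow> nat) (k :: nat \<Rightarrow> nat \<Rightarrow> nat) (lam :: nat \<Rightarrow> real) (W :: nat \<Rightarrow> real).
       regime_A1 d n k \<and> filterlim W at_top sequentially \<and>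
       ( (filterlim (\<lambda>m. lam m * (\<Prod>i<d. real (k i m)) / sqrt (\<Prod>i<d. real (n i m))) at_top sequentially
          \<and> (\<exists>c::real. 0 < c \<and> c < 1 \<and>
               (\<forall>m. W m \<le> c * lam m * (\<Prod>i<d. real (k i m)) / sqrt (\<Prod>i<d. real (n i m)))))
       \<or> liminf (\<lambda>m. ereal (lam m / sqrt (2 * (\<Sum>i<d. ln (real (n i m)))))) > 1 )
     \<longrightarrow> ((\<lambda>m. chc_risk d (\<lambda>i. k i m) (\<lambda>i. n i m) (lam m) (W m)) \<longlongrightarrow> 0) sequentially)
  \<and>
   (\<forall>(\<alpha>::real) (\<beta>::real) (N :: nat \<Rightarrow> nat) (n :: nat \<Rightarrow> nat \<Rightarrow> nat) (k :: nat \<Rightarrow> nat) (lam :: nat \<Rightarrow> real).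
       0 \<le> \<alpha> \<and> \<alpha> \<le> 1 \<and> regime_A2 d \<alpha> \<beta> N n k lam \<and>
       \<beta> < max (real d * \<alpha> - real d / 2) 0
     \<longrightarrow> (\<exists>W :: nat \<Rightarrow> real. filterlim W at_top sequentially \<and>
           ((\<lambda>m. chc_risk d (\<lambda>i. k m) (\<lambda>i. n i m) (lam m) (W m)) \<longlongrightarrow> 0) sequentially))"
  using chc_risk_tendsto_0_A1[OF assms] chc_reliable_A2[OF assms] by blast

end
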